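(* Let $M$ be a smooth compact manifold with the distance $d$ induced by a Riemannian metric, and let $\omega:\Lambda\times M\to M$ be an IFS (with $\Lambda$ a compact metric space) that is topologically stable. Then $\omega$ has the concordant shadowing property.
   Context: An IFS with phase space $M$ is given by a compact metric space $\Lambda$ and a continuous map $\omega:\Lambda\times M\to M$; write $\omega_\lambda=\omega(\lambda,\cdot)$. $C^0(M)$ denotes the continuous self-maps of $M$ with $d_{C^0}(f,g)=\max_{x}d(f(x),g(x))$. For two IFS $\omega$ (parameter space $\Lambda$) and $\tilde\omega$ (parameter space $\tilde\Lambda$) on $M$, $d_H(\omega,\tilde\omega)$ denotes the Hausdorff distance in $(C^0(M),d_{C^0})$ between the sets $\{\omega_\lambda:\lambda\in\Lambda\}$ and $\{\tilde\omega_\lambda:\lambda\in\tilde\Lambda\}$. For $\sigma=(\lambda_1,\lambda_2,\dots)\in\Lambda^{\mathbb N}$, set $\omega_{\sigma_0}=\mathrm{id}$ and $\omega_{\sigma_k}=\omega_{\lambda_k}\circ\cdots\circ\omega_{\lambda_1}$. A sequence $\{x_k\}_{k\ge0}$ is a $\delta$-chain with sequence of parameters $\sigma=(\lambda_1,\lambda_2,\dots)$ if $d(x_k,\omega_{\lambda_k}(x_{k-1}))\le\delta$ for all $k\ge1$. The IFS has the concordant shadowing property if for every $\varepsilon>0$ there is $\delta>0$ such that for every $\delta$-chain $\{x_k\}$ with sequence of parameters $\sigma$ there is $y\in M$ with $d(x_k,\omega_{\sigma_k}(y))<\varepsilon$ for all $k\ge0$. Given IFS $\omega,\tilde\omega$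 and sequences $\sigma=(\lambda_k)$ in $\Lambda$, $\tilde\sigma=(\tilde\lambda_k)$ in $\tilde\Lambda$ of the same length, the pair $(\sigma,\tilde\sigma)$ is $\delta$-compatible if $d_{C^0}(\omega_{\lambda_k},\tilde\omega_{\tilde\lambda_k})<\delta$ for all $k$. The IFS $\omega$ is topologically stable if for every $\varepsilon>0$ there is $\delta>0$ such that whenever $\tilde\omega$ is an IFS on $M$ (with any compact metric parameter space $\tilde\Lambda$) with $d_H(\omega,\tilde\omega)\le\delta$, then for every $\delta$-compatible pair $(\sigma,\tilde\sigma)\in\Lambda^{\mathbb N}\times\tilde\Lambda^{\mathbb N}$ there is a continuous $h:M\to M$ with $d_{C^0}(\omega_{\sigma_k}\circ h,\tilde\omega_{\tilde\sigma_k})<\varepsilon$ for all $k\in\mathbb N$ and $d_{C^0}(h,\mathrm{id})<\varepsilon$. *)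

theory Defs
  imports "HOL-Analysis.Analysis"
begin

fun iter_pderiv :: "'a::euclidean_space list \<Rightarrow> ('a \<Rightarrow> 'b::euclidean_space) \<Rightarrow> 'a \<Rightarrow> 'b" where
  "iter_pderiv [] f = f"
| "iter_pderiv (v # vs) f = (\<lambda>x. vector_derivative (\<lambda>t. iter_pderiv vs f (x + t *\<^sub>R v)) (at 0))"

definition smooth_on :: "'a::euclidean_space set \<Rightarrow> ('a \<Rightarrow> 'b::euclidean_space) \<Rightarrow> bool" where
  "smooth_on U f \<longleftrightarrow>
     (\<forall>vs. set vs \<subseteq> Basis \<longrightarrow>
        continuous_on U (iter_pderiv vs f) \<and>
        (\<forall>v\<in>Basis. \<forall>x\<in>U.
           ((\<lambda>t. iter_pderiv vs f (x + t *\<^sub>R v)) has_vector_derivative iter_pderiv (v # vs) f x) (at 0)))"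

definition smooth_submanifold :: "nat \<Rightarrow> 'a::euclidean_space set \<Rightarrow> bool" where
  "smooth_submanifold m M \<longleftrightarrow>
     (\<forall>p\<in>M. \<exists>U V (\<phi>::'a \<Rightarrow> 'a) \<psi> S.
        open U \<and> p \<in> U \<and> open V \<and> homeomorphism U V \<phi> \<psi> \<and>
        smooth_on U \<phi> \<and> smooth_on V \<psi> \<and>
        subspace S \<and> dim S = m \<and> \<phi> ` (U \<inter> M) = V \<inter> S)"

definition smooth_compact_manifold :: "'a::euclidean_space set \<Rightarrow> bool" where
  "smooth_compact_manifold M \<longleftrightarrow> M \<noteq> {} \<and> compact M \<and> (\<exists>m. smooth_submanifold m M)"

definition IFS :: "'l::metric_space set \<Rightarrow> 'a::metric_space set \<Rightarrow> ('l \<Rightarrow> 'a \<Rightarrow> 'a) \<Rightarrow> bool" where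
  "IFS L M \<omega> \<longleftrightarrow> compact L \<and> L \<noteq> {} \<and>
     continuous_on (L \<times> M) (\<lambda>(l, x). \<omega> l x) \<and> (\<forall>l\<in>L. \<forall>x\<in>M. \<omega> l x \<in> M)"

definition dC0 :: "'a::metric_space set \<Rightarrow> ('a \<Rightarrow> 'a) \<Rightarrow> ('a \<Rightarrow> 'a) \<Rightarrow> real" where
  "dC0 M f g = (SUP x\<in>M. dist (f x) (g x))"

definition dH_IFS :: "'a::metric_space set \<Rightarrow> 'l set \<Rightarrow> ('l \<Rightarrow> 'a \<Rightarrow> 'a) \<Rightarrow> 'm set \<Rightarrow> ('m \<Rightarrow> 'a \<Rightarrow> 'a) \<Rightarrow> real" where
  "dH_IFS M L \<omega> L' \<omega>' =
     max (SUP l\<in>L. INF l'\<in>L'. dC0 M (\<omega> l) (\<omega>' l'))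
         (SUP l'\<in>L'. INF l\<in>L. dC0 M (\<omega> l) (\<omega>' l'))"

text \<open>\<open>comp_seq \<omega> \<sigma> k\<close> = \<omega>_{\<sigma>_k}; the sequence \<open>\<sigma>\<close> is 0-indexed: \<open>\<sigma> 0 = \<lambda>_1\<close>.\<close>
fun comp_seq :: "('l \<Rightarrow> 'a \<Rightarrow> 'a) \<Rightarrow> (nat \<Rightarrow> 'l) \<Rightarrow> nat \<Rightarrow> 'a \<Rightarrow> 'a" where
  "comp_seq \<omega> \<sigma> 0 = id"
| "comp_seq \<omega> \<sigma> (Suc k) = \<omega> (\<sigma> k) \<circ> comp_seq \<omega> \<sigma> k"

definition delta_chain :: "'a::metric_space set \<Rightarrow> ('l \<Rightarrow> 'a \<Rightarrow> 'a) \<Rightarrow> real \<Rightarrow> (nat \<Rightarrow> 'a) \<Rightarrow> (nat \<Rightarrow> 'l) \<Rightarrow> bool" where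
  "delta_chain M \<omega> \<delta> xs \<sigma> \<longleftrightarrow>
     (\<forall>k. xs k \<in> M) \<and> (\<forall>k. dist (xs (Suc k)) (\<omega> (\<sigma> k) (xs k)) \<le> \<delta>)"

definition concordant_shadowing :: "'l::metric_space set \<Rightarrow> 'a::metric_space set \<Rightarrow> ('l \<Rightarrow> 'a \<Rightarrow> 'a) \<Rightarrow> bool" where
  "concordant_shadowing L M \<omega> \<longleftrightarrow>
     (\<forall>\<epsilon>>0. \<exists>\<delta>>0. \<forall>\<sigma> xs. (\<forall>k. \<sigma> k \<in> L) \<and> delta_chain M \<omega> \<delta> xs \<sigma> \<longrightarrow>
        (\<exists>y\<in>M. \<forall>k. dist (xs k) (comp_seq \<omega> \<sigma> k y) < \<epsilon>))"

text \<open>The perturbed IFS has a compact parameter space \<open>L'\<close> which is taken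
  inside the Hilbert-cube-like metric space \<open>nat \<Rightarrow> real\<close> (product metric); every compact metric
  space embeds homeomorphically there, so this ranges over all compact metric parameter spaces
  up to homeomorphism (only the continuity of the IFS map matters).\<close>
definition topologically_stable :: "'l::metric_space set \<Rightarrow> 'a::metric_space set \<Rightarrow> ('l \<Rightarrow> 'a \<Rightarrow> 'a) \<Rightarrow> bool" where
  "topologically_stable L M \<omega> \<longleftrightarrow>
     (\<forall>\<epsilon>>0. \<exists>\<delta>>0. \<forall>(L' :: (nat \<Rightarrow> real) set) \<omega>'.
        IFS L' M \<omega>' \<and> dH_IFS M L \<omega> L' \<omega>' \<le> \<delta> \<longrightarrow>
        (\<forall>\<sigma> \<sigma>'. (\<forall>k. \<sigma> k \<in> L) \<and> (\<forall>k. \<sigma>' k \<in> L') \<and>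
                 (\<forall>k. dC0 M (\<omega> (\<sigma> k)) (\<omega>' (\<sigma>' k)) < \<delta>) \<longrightarrow>
           (\<exists>h. continuous_on M h \<and> h ` M \<subseteq> M \<and>
                (\<forall>k. dC0 M (comp_seq \<omega> \<sigma> k \<circ> h) (comp_seq \<omega>' \<sigma>' k) < \<epsilon>) \<and>
                dC0 M h id < \<epsilon>)))"

end

(*
  A delta-chain of the IFS becomes a genuine orbit once each jump from omega_(sigma k) (x k)
  to x (k+1) is absorbed into a continuous self-map of M that is C^0-close to the identity.
  Such maps exist because a compact smooth submanifold is locally a Euclidean neighbourhood
  retract, so small displacements of a point extend to small displacements of all of M.
  Truncating at time N and adding a finite net of the maps of omega yields an IFS that is
  Hausdorff-close to omega and has the chain as an orbit. Topological stability then gives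
  a map h such that the omega-orbit of h (x 0) follows the chain up to time N, and a
  compactness argument lets N tend to infinity.
*)
theory Submission
  imports Defs
begin

lemma dC0_le:
  assumes "M \<noteq> {}" "\<And>x. x \<in> M \<Longrightarrow> dist (f x) (g x) \<le> c"
  shows "dC0 M f g \<le> c"
  unfolding dC0_def using assms by (intro cSUP_least) auto

lemma dist_le_dC0:
  assumes "bounded M" "f ` M \<subseteq> M" "g ` M \<subseteq> M" "x \<in> M"
  shows "dist (f x) (g x) \<le> dC0 M f g"
  unfolding dC0_def
proof (rule cSUP_upper)
  show "bdd_above ((\<lambda>x. dist (f x) (g x)) ` M)"
    using assms by (intro bdd_aboveI[where M="diameter M"]) (auto intro!: diameter_bounded_bound)
qed (use assms in auto)

lemma dC0_refl:
  assumes "M \<noteq> {}"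
  shows "dC0 M f f = 0"
  using assms by (simp add: dC0_def)

lemma dC0_nonneg:
  assumes "bounded M" "f ` M \<subseteq> M" "g ` M \<subseteq> M" "M \<noteq> {}"
  shows "0 \<le> dC0 M f g"
proof -
  obtain x where "x \<in> M" using assms(4) by blast
  then show ?thesis using dist_le_dC0[OF assms(1-3)] zero_le_dist order_trans by blast
qed

lemma IFS_continuous_on:
  assumes "IFS L M \<omega>" "l \<in> L"
  shows "continuous_on M (\<omega> l)"
proof -
  have "continuous_on (L \<times> M) (\<lambda>(l, x). \<omega> l x)" using assms(1) unfolding IFS_def by blast
  moreover have "Pair l ` M \<subseteq> L \<times> M" using assms(2) by blast
  ultimately have "continuous_on M ((\<lambda>(l, x). \<omega> l x) \<circ> Pair l)"
    by (intro continuous_on_compose continuous_on_Pair continuous_on_const continuous_on_id)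
      (rule continuous_on_subset)
  then show ?thesis by (simp add: comp_def)
qed

lemma IFS_maps_into:
  assumes "IFS L M \<omega>" "l \<in> L"
  shows "\<omega> l ` M \<subseteq> M"
  using assms unfolding IFS_def by blast

lemma comp_seq_maps_into:
  assumes "\<And>k. f (s k) ` M \<subseteq> M"
  shows "comp_seq f s k ` M \<subseteq> M"
  using assms by (induction k) auto

lemma continuous_on_comp_seq:
  assumes "\<And>k. f (s k) ` M \<subseteq> M" "\<And>k. continuous_on M (f (s k))"
  shows "continuous_on M (comp_seq f s k)"
proof (induction k)
  case (Suc k)
  have "continuous_on (comp_seq f s k ` M) (f (s k))"
    using comp_seq_maps_into[of f s M, OF assms(1)] assms(2) continuous_on_subset by blast
  then show ?case using continuous_on_compose[OF Suc.IH] by simp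
qed simp

lemma comp_seq_chain:
  assumes "\<And>j. j < N \<Longrightarrow> f (s j) (xs j) = xs (Suc j)" "k \<le> N"
  shows "comp_seq f s k (xs 0) = xs k"
  using assms(2)
proof (induction k)
  case (Suc k)
  then show ?case using assms(1)[of k] by simp
qed simp

section \<open>Small displacements of a compact submanifold\<close>

definition near_id_move :: "'a::metric_space set \<Rightarrow> real \<Rightarrow> 'a \<Rightarrow> 'a \<Rightarrow> bool" where
  "near_id_move M e p q \<longleftrightarrow>
     (\<exists>g. continuous_on M g \<and> g ` M \<subseteq> M \<and> g p = q \<and> (\<forall>x\<in>M. dist (g x) x < e))"

definition uniformly_locally_homogeneous :: "'a::metric_space set \<Rightarrow> bool" where
  "uniformly_locally_homogeneous M \<longleftrightarrow>
     (\<forall>e>0. \<exists>b>0. \<forall>p\<in>M. \<forall>q\<in>M. dist p q < b \<longrightarrow> near_id_move M e p q)"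

lemma retraction_bump_move:
  fixes M :: "'a::real_normed_vector set"
  assumes "closed M" "e > 0"
    and r: "continuous_on (cball p0 R) r" "r ` cball p0 R \<subseteq> M"
      "\<And>x. x \<in> M \<Longrightarrow> x \<in> cball p0 R \<Longrightarrow> r x = x"
    and p: "p \<in> M" "dist p0 p < R/4" and c: "norm c < R/4"
    and modulus: "\<And>x y. x \<in> cball p0 R \<Longrightarrow> y \<in> cball p0 R \<Longrightarrow> dist y x \<le> norm c \<Longrightarrow>
      dist (r y) (r x) < e"
  shows "near_id_move M e p (r (p + c))"
proof -
  (* g pushes x by the fraction beta x of c and retracts back onto M; beta is 1 at p and
     vanishes on the sphere of radius A around p, where g is glued to the identity. *)
  define A where "A = R/4"
  define \<beta> where "\<beta> x = 1 - dist x p / A" for x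
  define g where "g x = (if dist x p \<le> A then r (x + \<beta> x *\<^sub>R c) else x)" for x
  have A: "A > 0" using c norm_ge_zero[of c] unfolding A_def by linarith
  have shift: "dist (x + \<beta> x *\<^sub>R c) x \<le> norm c" if "dist x p \<le> A" for x
  proof -
    have "0 \<le> \<beta> x" "\<beta> x \<le> 1" using that A by (auto simp: \<beta>_def field_simps)
    then show ?thesis by (simp add: dist_norm mult_left_le_one_le)
  qed
  have in_ball: "x \<in> cball p0 R" "x + \<beta> x *\<^sub>R c \<in> cball p0 R" if "dist x p \<le> A" for x
  proof -
    have "dist p0 x < R/2"
      using that p(2) dist_triangle[of p0 x p] by (simp add: A_def dist_commute)
    moreover have "dist p0 (x + \<beta> x *\<^sub>R c) \<le> dist p0 x + norm c"
      using shift[OF that] dist_triangle[of p0 "x + \<beta> x *\<^sub>R c" x] by (simp add: dist_commute)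
    ultimately show "x \<in> cball p0 R" "x + \<beta> x *\<^sub>R c \<in> cball p0 R"
      using c zero_le_dist[of p0 x] unfolding mem_cball by linarith+
  qed
  have "continuous_on (M \<inter> cball p A \<union> M \<inter> - ball p A) g"
    unfolding g_def
  proof (rule continuous_on_cases)
    show "continuous_on (M \<inter> cball p A) (\<lambda>x. r (x + \<beta> x *\<^sub>R c))"
    proof (rule continuous_on_compose2[OF r(1)])
      show "continuous_on (M \<inter> cball p A) (\<lambda>x. x + \<beta> x *\<^sub>R c)"
        unfolding \<beta>_def by (intro continuous_intros) (use A in auto)
    qed (use in_ball in \<open>auto simp: dist_commute\<close>)
    show "\<forall>x. x \<in> M \<inter> cball p A \<and> \<not> dist x p \<le> A \<or> x \<in> M \<inter> - ball p A \<and> dist x p \<le> A \<longrightarrow>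
        r (x + \<beta> x *\<^sub>R c) = x"
      using A in_ball r(3) by (auto simp: \<beta>_def dist_commute)
  qed (use \<open>closed M\<close> in auto)
  moreover have "M \<inter> cball p A \<union> M \<inter> - ball p A = M" by auto
  moreover have "g ` M \<subseteq> M" using in_ball r(2) by (auto simp: g_def)
  moreover have "g p = r (p + c)" using A by (simp add: g_def \<beta>_def)
  moreover have "dist (g x) x < e" if "x \<in> M" for x
    using modulus[OF in_ball[of x] shift[of x]] r(3)[OF that in_ball(1)] \<open>e > 0\<close> by (auto simp: g_def)
  ultimately show ?thesis unfolding near_id_move_def by metis
qed

lemma local_retraction_near_id_moves:
  fixes M :: "'a::{real_normed_vector,heine_borel} set"
  assumes "closed M" "e > 0" "R > 0"
    and r: "continuous_on (cball p0 R) r" "r ` cball p0 R \<subseteq> M"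
      "\<And>x. x \<in> M \<Longrightarrow> x \<in> cball p0 R \<Longrightarrow> r x = x"
  shows "\<exists>b>0. \<forall>p\<in>M \<inter> ball p0 (R/4). \<forall>q\<in>M. dist p q < b \<longrightarrow> near_id_move M e p q"
proof -
  obtain d where d: "d > 0"
    "\<And>x y. x \<in> cball p0 R \<Longrightarrow> y \<in> cball p0 R \<Longrightarrow> dist y x < d \<Longrightarrow> dist (r y) (r x) < e"
    using compact_uniformly_continuous[OF r(1) compact_cball] \<open>e > 0\<close>
    unfolding uniformly_continuous_on_def by metis
  have "near_id_move M e p q"
    if p: "p \<in> M" "dist p0 p < R/4" and q: "q \<in> M" "dist p q < min d (R/4)" for p q
  proof -
    have "norm (q - p) < min d (R/4)" using q(2) by (simp add: dist_norm norm_minus_commute)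
    then have "near_id_move M e p (r (p + (q - p)))"
      using retraction_bump_move[OF \<open>closed M\<close> \<open>e > 0\<close> r p] d by force
    moreover have "q \<in> cball p0 R"
      using p(2) q(2) dist_triangle[of p0 q p] \<open>R > 0\<close> by (simp add: dist_commute)
    ultimately show ?thesis using r(3) q(1) by simp
  qed
  then show ?thesis using d(1) \<open>R > 0\<close> by (intro exI[of _ "min d (R/4)"]) auto
qed

lemma uniformly_locally_homogeneous_if_local_retractions:
  fixes M :: "'a::{real_normed_vector,heine_borel} set"
  assumes "compact M"
    and retract: "\<And>p. p \<in> M \<Longrightarrow> \<exists>R>0. \<exists>r. continuous_on (cball p R) r \<and> r ` cball p R \<subseteq> M \<and>
      (\<forall>x\<in>M \<inter> cball p R. r x = x)"
  shows "uniformly_locally_homogeneous M"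
  unfolding uniformly_locally_homogeneous_def
proof (intro allI impI)
  fix e :: real assume "e > 0"
  have "\<forall>p0\<in>M. \<exists>A>0. \<exists>b>0. \<forall>p\<in>M \<inter> ball p0 A. \<forall>q\<in>M. dist p q < b \<longrightarrow> near_id_move M e p q"
  proof
    fix p0 assume p0: "p0 \<in> M"
    obtain R r where R: "R > 0" and r: "continuous_on (cball p0 R) r" "r ` cball p0 R \<subseteq> M"
      "\<And>x. x \<in> M \<Longrightarrow> x \<in> cball p0 R \<Longrightarrow> r x = x"
      using retract[OF p0] by blast
    show "\<exists>A>0. \<exists>b>0. \<forall>p\<in>M \<inter> ball p0 A. \<forall>q\<in>M. dist p q < b \<longrightarrow> near_id_move M e p q"
      using local_retraction_near_id_moves[OF compact_imp_closed[OF \<open>compact M\<close>] \<open>e > 0\<close> R r] R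
      by (intro exI[of _ "R/4"]) simp
  qed
  from bchoice[OF this] obtain A where A: "\<forall>p0\<in>M. A p0 > 0 \<and> (\<exists>b>0. \<forall>p\<in>M \<inter> ball p0 (A p0).
      \<forall>q\<in>M. dist p q < b \<longrightarrow> near_id_move M e p q)" ..
  then have "\<forall>p0\<in>M. \<exists>b>0. \<forall>p\<in>M \<inter> ball p0 (A p0). \<forall>q\<in>M. dist p q < b \<longrightarrow> near_id_move M e p q"
    by blast
  from bchoice[OF this] obtain B where B: "\<forall>p0\<in>M. B p0 > 0 \<and> (\<forall>p\<in>M \<inter> ball p0 (A p0).
      \<forall>q\<in>M. dist p q < B p0 \<longrightarrow> near_id_move M e p q)" ..
  have "M \<subseteq> (\<Union>p0\<in>M. ball p0 (A p0))" using A by auto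
  then obtain C where C: "C \<subseteq> M" "finite C" "M \<subseteq> (\<Union>p0\<in>C. ball p0 (A p0))"
    by (rule compactE_image[OF \<open>compact M\<close> open_ball])
  define b where "b = Min (insert 1 (B ` C))"
  have "b > 0" using B C(1,2) unfolding b_def by (subst Min_gr_iff) auto
  moreover have "near_id_move M e p q" if "p \<in> M" "q \<in> M" "dist p q < b" for p q
  proof -
    obtain p0 where p0: "p0 \<in> C" "p \<in> ball p0 (A p0)" using C(3) \<open>p \<in> M\<close> by blast
    then have "b \<le> B p0" using C(2) by (simp add: b_def)
    moreover have "p0 \<in> M" using C(1) p0(1) by blast
    ultimately show ?thesis using B p0(2) that by auto
  qed
  ultimately show "\<exists>b>0. \<forall>p\<in>M. \<forall>q\<in>M. dist p q < b \<longrightarrow> near_id_move M e p q" by blast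
qed

lemma ENR_local_retraction:
  fixes M :: "'a::euclidean_space set"
  assumes "open U" "p \<in> U" "p \<in> M" "ENR (U \<inter> M)"
  shows "\<exists>R>0. \<exists>r. continuous_on (cball p R) r \<and> r ` cball p R \<subseteq> M \<and> (\<forall>x\<in>M \<inter> cball p R. r x = x)"
proof -
  obtain W r where "open W" "retraction W (U \<inter> M) r"
    using \<open>ENR (U \<inter> M)\<close> unfolding ENR_def retract_of_def by blast
  then have r: "U \<inter> M \<subseteq> W" "continuous_on W r" "r ` W \<subseteq> U \<inter> M" "\<And>x. x \<in> U \<inter> M \<Longrightarrow> r x = x"
    unfolding retraction_def by auto
  obtain R where "R > 0" and R: "cball p R \<subseteq> W \<inter> U"
    using open_contains_cball[of "W \<inter> U"] \<open>open W\<close> assms(1-3) r(1) by blast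
  moreover have "continuous_on (cball p R) r" using r(2) R continuous_on_subset by blast
  moreover have "r ` cball p R \<subseteq> M" using r(3) R by blast
  moreover have "\<forall>x\<in>M \<inter> cball p R. r x = x" using r(4) R by blast
  ultimately show ?thesis by blast
qed

lemma smooth_submanifold_locally_ENR:
  fixes M :: "'a::euclidean_space set"
  assumes "smooth_submanifold m M" "p \<in> M"
  obtains U where "open U" "p \<in> U" "ENR (U \<inter> M)"
proof -
  obtain U V and \<phi> :: "'a \<Rightarrow> 'a" and \<psi> S where chart: "open U" "p \<in> U" "open V"
    "homeomorphism U V \<phi> \<psi>" "subspace S" "\<phi> ` (U \<inter> M) = V \<inter> S"
    using assms unfolding smooth_submanifold_def by meson
  have "homeomorphism (U \<inter> M) (V \<inter> S) \<phi> \<psi>"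
    by (rule homeomorphism_of_subsets[OF chart(4) _ _ chart(6)]) auto
  moreover have "ENR (V \<inter> S)"
  proof (rule ENR_openin)
    show "ENR S" using chart(5) by (simp add: ENR_convex_closed closed_subspace subspace_imp_convex)
    show "openin (top_of_set S) (V \<inter> S)" using openin_open_Int[OF chart(3), of S] by (simp add: Int_commute)
  qed
  ultimately have "ENR (U \<inter> M)" using ENR_homeomorphic_ENR homeomorphic_def by blast
  then show ?thesis using chart that by blast
qed

lemma smooth_compact_manifold_uniformly_locally_homogeneous:
  fixes M :: "'a::euclidean_space set"
  assumes "smooth_compact_manifold M"
  shows "uniformly_locally_homogeneous M"
proof (rule uniformly_locally_homogeneous_if_local_retractions)
  obtain m where "smooth_submanifold m M" and "compact M"
    using assms unfolding smooth_compact_manifold_def by blast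
  then show "compact M" by simp
  fix p assume "p \<in> M"
  then obtain U where "open U" "p \<in> U" "ENR (U \<inter> M)"
    using smooth_submanifold_locally_ENR \<open>smooth_submanifold m M\<close> by blast
  then show "\<exists>R>0. \<exists>r. continuous_on (cball p R) r \<and> r ` cball p R \<subseteq> M \<and> (\<forall>x\<in>M \<inter> cball p R. r x = x)"
    using ENR_local_retraction \<open>p \<in> M\<close> by blast
qed

lemma delta_chain_perturbed_orbit:
  fixes M :: "'a::metric_space set"
  assumes IFS: "IFS L M \<omega>" and "M \<noteq> {}" "uniformly_locally_homogeneous M" "e > 0"
  obtains \<delta> where "\<delta> > 0"
    "\<And>\<sigma> xs. (\<And>k. \<sigma> k \<in> L) \<Longrightarrow> delta_chain M \<omega> \<delta> xs \<sigma> \<Longrightarrow>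
       \<exists>f. \<forall>k. continuous_on M (f k) \<and> f k ` M \<subseteq> M \<and> dC0 M (\<omega> (\<sigma> k)) (f k) \<le> e \<and>
         f k (xs k) = xs (Suc k)"
proof -
  obtain b where "b > 0" and moves: "\<forall>p\<in>M. \<forall>q\<in>M. dist p q < b \<longrightarrow> near_id_move M e p q"
    using assms(3,4) unfolding uniformly_locally_homogeneous_def by blast
  have "\<exists>f. \<forall>k. continuous_on M (f k) \<and> f k ` M \<subseteq> M \<and> dC0 M (\<omega> (\<sigma> k)) (f k) \<le> e \<and>
      f k (xs k) = xs (Suc k)"
    if \<sigma>: "\<And>k. \<sigma> k \<in> L" and chain: "delta_chain M \<omega> (b/2) xs \<sigma>" for \<sigma> xs
  proof -
    have "\<exists>g. continuous_on M g \<and> g ` M \<subseteq> M \<and> g (\<omega> (\<sigma> k) (xs k)) = xs (Suc k) \<and>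
        (\<forall>x\<in>M. dist (g x) x < e)" for k
    proof -
      have "xs k \<in> M" "xs (Suc k) \<in> M" "dist (xs (Suc k)) (\<omega> (\<sigma> k) (xs k)) \<le> b/2"
        using chain unfolding delta_chain_def by auto
      moreover have "\<omega> (\<sigma> k) (xs k) \<in> M" using IFS_maps_into[OF IFS \<sigma>] \<open>xs k \<in> M\<close> by blast
      ultimately have "near_id_move M e (\<omega> (\<sigma> k) (xs k)) (xs (Suc k))"
        using moves \<open>b > 0\<close> by (simp add: dist_commute)
      then show ?thesis unfolding near_id_move_def .
    qed
    then obtain G where G: "\<And>k. continuous_on M (G k)" "\<And>k. G k ` M \<subseteq> M"
      "\<And>k. G k (\<omega> (\<sigma> k) (xs k)) = xs (Suc k)" "\<And>k x. x \<in> M \<Longrightarrow> dist (G k x) x < e"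
      by metis
    have "continuous_on M (G k \<circ> \<omega> (\<sigma> k))" for k
      by (rule continuous_on_compose[OF IFS_continuous_on[OF IFS \<sigma>]
            continuous_on_subset[OF G(1) IFS_maps_into[OF IFS \<sigma>]]])
    moreover have "(G k \<circ> \<omega> (\<sigma> k)) ` M \<subseteq> M" for k
      using IFS_maps_into[OF IFS \<sigma>] G(2) by (auto simp: image_subset_iff)
    moreover have "dC0 M (\<omega> (\<sigma> k)) (G k \<circ> \<omega> (\<sigma> k)) \<le> e" for k
      using IFS_maps_into[OF IFS \<sigma>] G(4) dC0_le[OF \<open>M \<noteq> {}\<close>]
      by (auto simp: dist_commute image_subset_iff less_imp_le)
    ultimately show ?thesis using G(3) by (intro exI[of _ "\<lambda>k. G k \<circ> \<omega> (\<sigma> k)"]) simp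
  qed
  moreover have "b/2 > 0" using \<open>b > 0\<close> by simp
  ultimately show ?thesis using that by blast
qed

section \<open>Finite perturbations of an IFS\<close>

(* Topological stability only quantifies over perturbations with parameters in nat => real;
   a finite family of maps F 0, ..., F (n - 1) is parametrised by the constant sequences. *)
definition index_param :: "nat \<Rightarrow> nat \<Rightarrow> real" where
  "index_param j = (\<lambda>_. real j)"

definition indexed_maps :: "(nat \<Rightarrow> 'a \<Rightarrow> 'a) \<Rightarrow> (nat \<Rightarrow> real) \<Rightarrow> 'a \<Rightarrow> 'a" where
  "indexed_maps F p = F (nat \<lfloor>p 0\<rfloor>)"

lemma indexed_maps_index_param [simp]: "indexed_maps F (index_param j) = F j"
  by (simp add: indexed_maps_def index_param_def)

lemma IFS_indexed_maps:
  assumes "closed M" "n > 0"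
    and "\<And>j. j < n \<Longrightarrow> continuous_on M (F j)" "\<And>j. j < n \<Longrightarrow> F j ` M \<subseteq> M"
  shows "IFS (index_param ` {..<n}) M (indexed_maps F)"
  unfolding IFS_def
proof (intro conjI ballI)
  show "compact (index_param ` {..<n})" by (simp add: finite_imp_compact)
  show "index_param ` {..<n} \<noteq> {}" using \<open>n > 0\<close> by blast
  show "indexed_maps F p x \<in> M" if "p \<in> index_param ` {..<n}" "x \<in> M" for p x
    using that assms(4) by (auto simp: image_subset_iff)
  have "index_param ` {..<n} \<times> M = (\<Union>j\<in>{..<n}. {index_param j} \<times> M)" by auto
  moreover have "continuous_on (\<Union>j\<in>{..<n}. {index_param j} \<times> M) (\<lambda>(p, x). indexed_maps F p x)"
  proof (rule continuous_on_closed_Union)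
    fix j assume "j \<in> {..<n}"
    then have "continuous_on ({index_param j} \<times> M) (F j \<circ> snd)"
      using assms(3) by (intro continuous_on_compose continuous_on_snd continuous_on_id) auto
    then show "continuous_on ({index_param j} \<times> M) (\<lambda>(p, x). indexed_maps F p x)"
      by (rule continuous_on_eq) auto
  qed (use \<open>closed M\<close> in \<open>auto intro: closed_Times\<close>)
  ultimately show "continuous_on (index_param ` {..<n} \<times> M) (\<lambda>(p, x). indexed_maps F p x)"
    by simp
qed

lemma IFS_finite_net:
  fixes M :: "'a::metric_space set" and L :: "'l::metric_space set"
  assumes "IFS L M \<omega>" "compact M" "M \<noteq> {}" "\<eta> > 0"
  obtains m :: nat and net where "m > 0" "\<And>j. j < m \<Longrightarrow> net j \<in> L"
    "\<And>l. l \<in> L \<Longrightarrow> \<exists>j<m. dC0 M (\<omega> l) (\<omega> (net j)) \<le> \<eta>"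
proof -
  have L: "compact L" "L \<noteq> {}" and cont: "continuous_on (L \<times> M) (\<lambda>(l, x). \<omega> l x)"
    using assms(1) unfolding IFS_def by auto
  have "uniformly_continuous_on (L \<times> M) (\<lambda>(l, x). \<omega> l x)"
    by (rule compact_uniformly_continuous[OF cont compact_Times[OF L(1) \<open>compact M\<close>]])
  then obtain \<rho> where "\<rho> > 0" and \<rho>: "\<forall>z\<in>L \<times> M. \<forall>z'\<in>L \<times> M. dist z' z < \<rho> \<longrightarrow>
      dist ((\<lambda>(l, x). \<omega> l x) z') ((\<lambda>(l, x). \<omega> l x) z) < \<eta>"
    using \<open>\<eta> > 0\<close> unfolding uniformly_continuous_on_def by blast
  have close: "dist (\<omega> l' x) (\<omega> l x) < \<eta>"
    if "l \<in> L" "l' \<in> L" "x \<in> M" "dist l' l < \<rho>" for l l' x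
  proof -
    have "dist (l', x) (l, x) < \<rho>" using that(4) by (simp add: dist_Pair_Pair)
    then show ?thesis using \<rho>[rule_format, of "(l, x)" "(l', x)"] that(1-3) by simp
  qed
  have "L \<subseteq> (\<Union>l\<in>L. ball l \<rho>)" using \<open>\<rho> > 0\<close> by auto
  then obtain T where T: "T \<subseteq> L" "finite T" "L \<subseteq> (\<Union>t\<in>T. ball t \<rho>)"
    by (rule compactE_image[OF L(1) open_ball])
  obtain m :: nat and net where net: "T = net ` {i. i < m}"
    using finite_imp_nat_seg_image_inj_on[OF T(2)] by blast
  have near: "\<exists>j<m. dC0 M (\<omega> l) (\<omega> (net j)) \<le> \<eta>" if l: "l \<in> L" for l
  proof -
    obtain j where j: "j < m" "dist (net j) l < \<rho>" using T(3) l net by auto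
    have "net j \<in> L" using j(1) net T(1) by blast
    then have "dist (\<omega> l x) (\<omega> (net j) x) \<le> \<eta>" if "x \<in> M" for x
      using close[of "net j" l x] j(2) l that by (simp add: dist_commute)
    then show ?thesis using j(1) dC0_le[OF \<open>M \<noteq> {}\<close>] by blast
  qed
  have m_pos: "m > 0"
  proof -
    obtain l where "l \<in> L" using L(2) by blast
    then obtain j where "j < m" using near by blast
    then show ?thesis by simp
  qed
  have net_in: "net j \<in> L" if "j < m" for j using net T(1) that by auto
  show ?thesis by (rule that[OF m_pos net_in near])
qed

lemma dH_IFS_le:
  assumes "IFS L M \<omega>" "IFS L' M \<omega>'" "bounded M" "M \<noteq> {}"
    and near: "\<And>l. l \<in> L \<Longrightarrow> \<exists>l'\<in>L'. dC0 M (\<omega> l) (\<omega>' l') \<le> \<eta>"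
      "\<And>l'. l' \<in> L' \<Longrightarrow> \<exists>l\<in>L. dC0 M (\<omega> l) (\<omega>' l') \<le> \<eta>"
  shows "dH_IFS M L \<omega> L' \<omega>' \<le> \<eta>"
proof -
  have nonneg: "0 \<le> dC0 M (\<omega> l) (\<omega>' l')" if "l \<in> L" "l' \<in> L'" for l l'
    using assms(3) IFS_maps_into[OF assms(1) that(1)] IFS_maps_into[OF assms(2) that(2)] assms(4)
    by (rule dC0_nonneg)
  have inf_le: "(INF l'\<in>L'. dC0 M (\<omega> l) (\<omega>' l')) \<le> \<eta>" if l: "l \<in> L" for l
  proof -
    obtain l' where "l' \<in> L'" "dC0 M (\<omega> l) (\<omega>' l') \<le> \<eta>" using near(1)[OF l] by blast
    moreover have "bdd_below ((\<lambda>l'. dC0 M (\<omega> l) (\<omega>' l')) ` L')"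
      using nonneg[OF l] by (rule bdd_belowI2)
    ultimately show ?thesis by (intro cINF_lower2)
  qed
  have inf_le': "(INF l\<in>L. dC0 M (\<omega> l) (\<omega>' l')) \<le> \<eta>" if l': "l' \<in> L'" for l'
  proof -
    obtain l where "l \<in> L" "dC0 M (\<omega> l) (\<omega>' l') \<le> \<eta>" using near(2)[OF l'] by blast
    moreover have "bdd_below ((\<lambda>l. dC0 M (\<omega> l) (\<omega>' l')) ` L)"
      using nonneg[OF _ l'] by (rule bdd_belowI2)
    ultimately show ?thesis by (intro cINF_lower2)
  qed
  have "L \<noteq> {}" "L' \<noteq> {}" using assms(1,2) by (simp_all add: IFS_def)
  then show ?thesis
    unfolding dH_IFS_def using inf_le inf_le' by (intro max.boundedI cSUP_least)
qed

lemma finite_perturbation_IFS: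
  fixes M :: "'a::metric_space set" and L :: "'l::metric_space set" and N :: nat
  assumes IFS: "IFS L M \<omega>" and "compact M" "M \<noteq> {}" "\<eta> > 0" and \<sigma>: "\<And>k. \<sigma> k \<in> L"
    and f: "\<And>j. j < N \<Longrightarrow> continuous_on M (f j)" "\<And>j. j < N \<Longrightarrow> f j ` M \<subseteq> M"
      "\<And>j. j < N \<Longrightarrow> dC0 M (\<omega> (\<sigma> j)) (f j) \<le> \<eta>"
  obtains L' :: "(nat \<Rightarrow> real) set" and \<omega>' \<sigma>'
  where "IFS L' M \<omega>'" "dH_IFS M L \<omega> L' \<omega>' \<le> \<eta>" "\<And>k. \<sigma>' k \<in> L'"
    "\<And>k. dC0 M (\<omega> (\<sigma> k)) (\<omega>' (\<sigma>' k)) \<le> \<eta>" "\<And>k. k < N \<Longrightarrow> \<omega>' (\<sigma>' k) = f k"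
proof -
  obtain m :: nat and net where net: "m > 0" "\<And>j. j < m \<Longrightarrow> net j \<in> L"
    "\<And>l. l \<in> L \<Longrightarrow> \<exists>j<m. dC0 M (\<omega> l) (\<omega> (net j)) \<le> \<eta>"
    by (fact IFS_finite_net[OF IFS \<open>compact M\<close> \<open>M \<noteq> {}\<close> \<open>\<eta> > 0\<close>])
  have "\<forall>l\<in>L. \<exists>j. j < m \<and> dC0 M (\<omega> l) (\<omega> (net j)) \<le> \<eta>" using net(3) by blast
  from bchoice[OF this] obtain idx where idx: "\<forall>l\<in>L. idx l < m \<and> dC0 M (\<omega> l) (\<omega> (net (idx l))) \<le> \<eta>" ..
  (* Parameters below N carry the maps f; the remaining ones carry a finite net of the maps
     of omega, which is what makes the new IFS Hausdorff-close to omega. *)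
  define par where "par j = (if j < N then \<sigma> j else net (j - N))" for j
  define F where "F j = (if j < N then f j else \<omega> (par j))" for j
  define L' where "L' = index_param ` {..<N + m}"
  define \<sigma>' where "\<sigma>' k = index_param (if k < N then k else N + idx (\<sigma> k))" for k
  have par: "par j \<in> L" if "j < N + m" for j using that \<sigma> net(2) by (simp add: par_def)
  have F_close: "dC0 M (\<omega> (par j)) (F j) \<le> \<eta>" for j
    using f(3) \<open>\<eta> > 0\<close> by (simp add: F_def par_def dC0_refl[OF \<open>M \<noteq> {}\<close>])
  have "continuous_on M (F j)" "F j ` M \<subseteq> M" if "j < N + m" for j
    using f(1,2) par[OF that] IFS_continuous_on[OF IFS] IFS_maps_into[OF IFS] by (simp_all add: F_def)
  then have IFS': "IFS L' M (indexed_maps F)"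
    unfolding L'_def using net(1) compact_imp_closed[OF \<open>compact M\<close>] by (intro IFS_indexed_maps) auto
  moreover have "dH_IFS M L \<omega> L' (indexed_maps F) \<le> \<eta>"
  proof (rule dH_IFS_le[OF IFS IFS' compact_imp_bounded[OF \<open>compact M\<close>] \<open>M \<noteq> {}\<close>])
    show "\<exists>l'\<in>L'. dC0 M (\<omega> l) (indexed_maps F l') \<le> \<eta>" if "l \<in> L" for l
      using idx that by (intro bexI[of _ "index_param (N + idx l)"]) (auto simp: L'_def F_def par_def)
    show "\<exists>l\<in>L. dC0 M (\<omega> l) (indexed_maps F l') \<le> \<eta>" if l': "l' \<in> L'" for l'
    proof -
      obtain j where "j < N + m" "l' = index_param j" using l' by (auto simp: L'_def)
      then show ?thesis using par F_close by (intro bexI[of _ "par j"]) simp_all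
    qed
  qed
  moreover have "\<sigma>' k \<in> L'" for k using idx \<sigma> by (auto simp: \<sigma>'_def L'_def)
  moreover have "dC0 M (\<omega> (\<sigma> k)) (indexed_maps F (\<sigma>' k)) \<le> \<eta>" for k
    using F_close[of k] idx \<sigma> by (auto simp: \<sigma>'_def F_def par_def)
  moreover have "indexed_maps F (\<sigma>' k) = f k" if "k < N" for k
    using that by (simp add: \<sigma>'_def F_def)
  ultimately show ?thesis by (rule that)
qed

section \<open>Shadowing\<close>

lemma shadowing_of_finite_shadowing:
  fixes M :: "'a::metric_space set"
  assumes "compact M" "\<And>k. f (s k) ` M \<subseteq> M" "\<And>k. continuous_on M (f (s k))"
    and finite_shadow: "\<And>N. \<exists>y\<in>M. \<forall>k\<le>N. dist (xs k) (comp_seq f s k y) \<le> \<epsilon>"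
  shows "\<exists>y\<in>M. \<forall>k. dist (xs k) (comp_seq f s k y) \<le> \<epsilon>"
proof -
  define K where "K k = M \<inter> comp_seq f s k -` cball (xs k) \<epsilon>" for k
  have closed_K: "closed (K k)" for k
    unfolding K_def using continuous_on_comp_seq[of f s M, OF assms(2,3)] compact_imp_closed[OF \<open>compact M\<close>]
    by (intro continuous_closed_preimage) auto
  have meets_K: "M \<inter> (\<Inter>k\<in>I. K k) \<noteq> {}" if "finite I" for I
  proof -
    obtain y where "y \<in> M" "\<forall>k\<le>Max I. dist (xs k) (comp_seq f s k y) \<le> \<epsilon>"
      using finite_shadow by blast
    then have "y \<in> M \<inter> (\<Inter>k\<in>I. K k)" using Max_ge[OF \<open>finite I\<close>] by (auto simp: K_def)
    then show ?thesis by blast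
  qed
  have "M \<inter> (\<Inter>k\<in>UNIV. K k) \<noteq> {}"
    by (rule compact_imp_fip_image[OF \<open>compact M\<close>]) (simp_all add: closed_K meets_K)
  then obtain y where "y \<in> M \<inter> (\<Inter>k\<in>UNIV. K k)" by blast
  then show ?thesis by (auto simp: K_def)
qed

lemma topologically_stableD:
  assumes "topologically_stable L M \<omega>" "\<epsilon> > 0"
  obtains \<delta> where "\<delta> > 0"
    "\<And>(L' :: (nat \<Rightarrow> real) set) \<omega>' \<sigma> \<sigma>'. IFS L' M \<omega>' \<Longrightarrow> dH_IFS M L \<omega> L' \<omega>' \<le> \<delta> \<Longrightarrow>
       (\<And>k. \<sigma> k \<in> L) \<Longrightarrow> (\<And>k. \<sigma>' k \<in> L') \<Longrightarrow> (\<And>k. dC0 M (\<omega> (\<sigma> k)) (\<omega>' (\<sigma>' k)) < \<delta>) \<Longrightarrow>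
       \<exists>h. h ` M \<subseteq> M \<and> (\<forall>k. dC0 M (comp_seq \<omega> \<sigma> k \<circ> h) (comp_seq \<omega>' \<sigma>' k) < \<epsilon>)"
  using assms unfolding topologically_stable_def by (metis (no_types, lifting))

lemma topologically_stable_shadows_perturbed_orbits:
  fixes M :: "'a::metric_space set" and L :: "'l::metric_space set"
  assumes IFS: "IFS L M \<omega>" and "compact M" "M \<noteq> {}" "topologically_stable L M \<omega>" "\<epsilon> > 0"
  obtains \<eta> where "\<eta> > 0"
    "\<And>\<sigma> f xs N. (\<And>k. \<sigma> k \<in> L) \<Longrightarrow> (\<And>k. continuous_on M (f k)) \<Longrightarrow> (\<And>k. f k ` M \<subseteq> M) \<Longrightarrow>
       (\<And>k. dC0 M (\<omega> (\<sigma> k)) (f k) \<le> \<eta>) \<Longrightarrow> xs 0 \<in> M \<Longrightarrow> (\<And>k. f k (xs k) = xs (Suc k)) \<Longrightarrow>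
       \<exists>y\<in>M. \<forall>k\<le>N. dist (xs k) (comp_seq \<omega> \<sigma> k y) \<le> \<epsilon>"
proof -
  obtain \<delta> where "\<delta> > 0" and stable: "\<And>(L' :: (nat \<Rightarrow> real) set) \<omega>' \<sigma> \<sigma>'.
      IFS L' M \<omega>' \<Longrightarrow> dH_IFS M L \<omega> L' \<omega>' \<le> \<delta> \<Longrightarrow> (\<And>k. \<sigma> k \<in> L) \<Longrightarrow> (\<And>k. \<sigma>' k \<in> L') \<Longrightarrow>
      (\<And>k. dC0 M (\<omega> (\<sigma> k)) (\<omega>' (\<sigma>' k)) < \<delta>) \<Longrightarrow>
      \<exists>h. h ` M \<subseteq> M \<and> (\<forall>k. dC0 M (comp_seq \<omega> \<sigma> k \<circ> h) (comp_seq \<omega>' \<sigma>' k) < \<epsilon>)"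
    by (fact topologically_stableD[OF assms(4,5)])
  have shadow: "\<exists>y\<in>M. \<forall>k\<le>N. dist (xs k) (comp_seq \<omega> \<sigma> k y) \<le> \<epsilon>"
    if \<sigma>: "\<And>k. \<sigma> k \<in> L" and f: "\<And>k. continuous_on M (f k)" "\<And>k. f k ` M \<subseteq> M"
      "\<And>k. dC0 M (\<omega> (\<sigma> k)) (f k) \<le> \<delta>/2" and "xs 0 \<in> M" "\<And>k. f k (xs k) = xs (Suc k)"
    for \<sigma> f xs N
  proof -
    obtain L' :: "(nat \<Rightarrow> real) set" and \<omega>' \<sigma>' where L': "IFS L' M \<omega>'"
      "dH_IFS M L \<omega> L' \<omega>' \<le> \<delta>/2" "\<And>k. \<sigma>' k \<in> L'" "\<And>k. dC0 M (\<omega> (\<sigma> k)) (\<omega>' (\<sigma>' k)) \<le> \<delta>/2"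
      "\<And>k. k < N \<Longrightarrow> \<omega>' (\<sigma>' k) = f k"
      by (fact finite_perturbation_IFS[OF IFS \<open>compact M\<close> \<open>M \<noteq> {}\<close> half_gt_zero[OF \<open>\<delta> > 0\<close>] \<sigma> f])
    have dH: "dH_IFS M L \<omega> L' \<omega>' \<le> \<delta>" using L'(2) \<open>\<delta> > 0\<close> by linarith
    have compatible: "dC0 M (\<omega> (\<sigma> k)) (\<omega>' (\<sigma>' k)) < \<delta>" for k
      using L'(4)[of k] \<open>\<delta> > 0\<close> by linarith
    from stable[OF L'(1) dH \<sigma> L'(3) compatible] obtain h
      where "h ` M \<subseteq> M \<and> (\<forall>k. dC0 M (comp_seq \<omega> \<sigma> k \<circ> h) (comp_seq \<omega>' \<sigma>' k) < \<epsilon>)" ..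
    then have h: "h ` M \<subseteq> M" "\<And>k. dC0 M (comp_seq \<omega> \<sigma> k \<circ> h) (comp_seq \<omega>' \<sigma>' k) < \<epsilon>"
      by simp_all
    have "dist (xs k) (comp_seq \<omega> \<sigma> k (h (xs 0))) \<le> \<epsilon>" if "k \<le> N" for k
    proof -
      have "comp_seq \<omega>' \<sigma>' k (xs 0) = xs k"
        by (rule comp_seq_chain[OF _ that]) (simp add: L'(5) \<open>\<And>k. f k (xs k) = xs (Suc k)\<close>)
      moreover have "dist ((comp_seq \<omega> \<sigma> k \<circ> h) (xs 0)) (comp_seq \<omega>' \<sigma>' k (xs 0))
          \<le> dC0 M (comp_seq \<omega> \<sigma> k \<circ> h) (comp_seq \<omega>' \<sigma>' k)"
      proof (rule dist_le_dC0[OF compact_imp_bounded[OF \<open>compact M\<close>] _ _ \<open>xs 0 \<in> M\<close>])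
        show "(comp_seq \<omega> \<sigma> k \<circ> h) ` M \<subseteq> M"
          using comp_seq_maps_into[of \<omega> \<sigma> M k, OF IFS_maps_into[OF IFS \<sigma>]] h(1)
          by (auto simp: image_subset_iff)
        show "comp_seq \<omega>' \<sigma>' k ` M \<subseteq> M"
          using comp_seq_maps_into[of \<omega>' \<sigma>' M k] IFS_maps_into[OF L'(1) L'(3)] by blast
      qed
      ultimately show ?thesis using h(2)[of k] by (simp add: dist_commute)
    qed
    moreover have "h (xs 0) \<in> M" using h(1) \<open>xs 0 \<in> M\<close> by blast
    ultimately show ?thesis by blast
  qed
  show ?thesis by (rule that[OF half_gt_zero[OF \<open>\<delta> > 0\<close>] shadow])
qed

lemma topologically_stable_imp_concordant_shadowing:
  fixes M :: "'a::metric_space set" and L :: "'l::metric_space set"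
  assumes IFS: "IFS L M \<omega>" and "compact M" "M \<noteq> {}" "uniformly_locally_homogeneous M"
    and "topologically_stable L M \<omega>"
  shows "concordant_shadowing L M \<omega>"
  unfolding concordant_shadowing_def
proof (intro allI impI)
  fix \<epsilon> :: real assume "\<epsilon> > 0"
  obtain \<eta> where "\<eta> > 0" and shadow: "\<And>\<sigma> f xs N. (\<And>k. \<sigma> k \<in> L) \<Longrightarrow> (\<And>k. continuous_on M (f k)) \<Longrightarrow>
      (\<And>k. f k ` M \<subseteq> M) \<Longrightarrow> (\<And>k. dC0 M (\<omega> (\<sigma> k)) (f k) \<le> \<eta>) \<Longrightarrow> xs 0 \<in> M \<Longrightarrow>
      (\<And>k. f k (xs k) = xs (Suc k)) \<Longrightarrow> \<exists>y\<in>M. \<forall>k\<le>N. dist (xs k) (comp_seq \<omega> \<sigma> k y) \<le> \<epsilon>/2"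
    by (fact topologically_stable_shadows_perturbed_orbits[OF IFS \<open>compact M\<close> \<open>M \<noteq> {}\<close> assms(5)
          half_gt_zero[OF \<open>\<epsilon> > 0\<close>]])
  obtain \<delta> where "\<delta> > 0" and perturb: "\<And>\<sigma> xs. (\<And>k. \<sigma> k \<in> L) \<Longrightarrow> delta_chain M \<omega> \<delta> xs \<sigma> \<Longrightarrow>
      \<exists>f. \<forall>k. continuous_on M (f k) \<and> f k ` M \<subseteq> M \<and> dC0 M (\<omega> (\<sigma> k)) (f k) \<le> \<eta> \<and>
        f k (xs k) = xs (Suc k)"
    by (fact delta_chain_perturbed_orbit[OF IFS \<open>M \<noteq> {}\<close> assms(4) \<open>\<eta> > 0\<close>])
  have "\<exists>y\<in>M. \<forall>k. dist (xs k) (comp_seq \<omega> \<sigma> k y) < \<epsilon>"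
    if \<sigma>: "\<forall>k. \<sigma> k \<in> L" and chain: "delta_chain M \<omega> \<delta> xs \<sigma>" for \<sigma> xs
  proof -
    obtain f where f: "\<And>k. continuous_on M (f k)" "\<And>k. f k ` M \<subseteq> M"
      "\<And>k. dC0 M (\<omega> (\<sigma> k)) (f k) \<le> \<eta>" "\<And>k. f k (xs k) = xs (Suc k)"
      using perturb[OF \<sigma>[rule_format] chain] by blast
    have "xs 0 \<in> M" using chain by (simp add: delta_chain_def)
    have "\<exists>y\<in>M. \<forall>k. dist (xs k) (comp_seq \<omega> \<sigma> k y) \<le> \<epsilon>/2"
    proof (rule shadowing_of_finite_shadowing[OF \<open>compact M\<close>])
      show "\<omega> (\<sigma> k) ` M \<subseteq> M" "continuous_on M (\<omega> (\<sigma> k))" for k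
        using IFS_maps_into[OF IFS] IFS_continuous_on[OF IFS] \<sigma> by blast+
      show "\<exists>y\<in>M. \<forall>k\<le>N. dist (xs k) (comp_seq \<omega> \<sigma> k y) \<le> \<epsilon>/2" for N
        by (rule shadow[OF \<sigma>[rule_format] f(1-3) \<open>xs 0 \<in> M\<close> f(4)])
    qed
    then obtain y where y: "y \<in> M" "\<And>k. dist (xs k) (comp_seq \<omega> \<sigma> k y) \<le> \<epsilon>/2" by blast
    have "dist (xs k) (comp_seq \<omega> \<sigma> k y) < \<epsilon>" for k using y(2)[of k] \<open>\<epsilon> > 0\<close> by linarith
    then show ?thesis using y(1) by blast
  qed
  with \<open>\<delta> > 0\<close> show "\<exists>\<delta>>0. \<forall>\<sigma> xs. (\<forall>k. \<sigma> k \<in> L) \<and> delta_chain M \<omega> \<delta> xs \<sigma> \<longrightarrow>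
      (\<exists>y\<in>M. \<forall>k. dist (xs k) (comp_seq \<omega> \<sigma> k y) < \<epsilon>)" by blast
qed

theorem theorem2:
  fixes M :: "'a::euclidean_space set"
    and L :: "'l::metric_space set"
    and \<omega> :: "'l \<Rightarrow> 'a \<Rightarrow> 'a"
  assumes "smooth_compact_manifold M"
    and "IFS L M \<omega>"
    and "topologically_stable L M \<omega>"
  shows "concordant_shadowing L M \<omega>"
proof (rule topologically_stable_imp_concordant_shadowing[OF assms(2) _ _ _ assms(3)])
  show "compact M" "M \<noteq> {}" using assms(1) unfolding smooth_compact_manifold_def by auto
  show "uniformly_locally_homogeneous M"
    using assms(1) by (rule smooth_compact_manifold_uniformly_locally_homogeneous)
qed

end
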